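(* Let $\mathbf K$ be a commutative field, $p,q\in\mathbb N$, and let $\mathcal A\subset\mathbf K^{\mathcal M_{p\times q}}$ be a recursively closed vector space with finite saturation level $N$. Then $\mathcal A$ and $\mathcal A[\mathcal M_{p\times q}^{\le N}]$ are isomorphic. In particular $\mathcal A$ is finite-dimensional and contained in $\mathrm{Rec}_{p\times q}(\mathbf K)$.
   Context: For $p,q,l\in\mathbb N$, $\mathcal M_{p\times q}^l$ is the set of pairs $(U,W)$ of words of common length $l$ with $U\in\{0,\dots,p-1\}^l$, $W\in\{0,\dots,q-1\}^l$; $\mathcal M_{p\times q}=\bigcup_l\mathcal M_{p\times q}^l$ (a monoid under concatenation) and $\mathcal M_{p\times q}^{\le l}$ is the set of words of length at most $l$. $\mathbf K^{\mathcal M_{p\times q}}$ is the space of functions $\mathcal M_{p\times q}\to\mathbf K$, values written $A[U,W]$. Shift maps: $(\rho(S,T)A)[U,W]=A[US,WT]$. A subspace is recursively closed if it is invariant under all shift maps. For a subspace $\mathcal A$, $\mathcal A[\mathcal M_{p\times q}^{\le l}]$ denotes the image of $\mathcal A$ under restriction of functions to $\mathcal M_{p\times q}^{\le l}$. The saturation level of a non-zero subspace $\mathcal A$ is the smallest integer $N\ge0$ (if any) such that the natural projection $\mathcal A[\mathcal M_{p\times q}^{\le N+1}]\to\mathcal A[\mathcal M_{p\times q}^{\le N}]$ is an isomorphism; it is $\infty$ if no such $N$ exists, and the zero space has saturation level $-1$. $\mathrm{Rec}_{p\times q}(\mathbf K)$ is the set of $A$ whose linear span of $\{\rho(S,T)A\}$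 is finite-dimensional. *)

theory Defs
  imports Main
begin

definition inM :: "nat \<Rightarrow> nat \<Rightarrow> nat list \<times> nat list \<Rightarrow> bool" where
  "inM p q x \<longleftrightarrow> length (fst x) = length (snd x) \<and> set (fst x) \<subseteq> {..<p} \<and> set (snd x) \<subseteq> {..<q}"

definition inM_le :: "nat \<Rightarrow> nat \<Rightarrow> nat \<Rightarrow> nat list \<times> nat list \<Rightarrow> bool" where
  "inM_le p q l x \<longleftrightarrow> inM p q x \<and> length (fst x) \<le> l"

(* K^{M_{p x q}}: functions on M_{p x q}, represented extensionally (zero outside M) *)
definition KM :: "nat \<Rightarrow> nat \<Rightarrow> (nat list \<times> nat list \<Rightarrow> 'a::field) set" where
  "KM p q = {A. \<forall>x. \<not> inM p q x \<longrightarrow> A x = 0}"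

definition is_subspace :: "nat \<Rightarrow> nat \<Rightarrow> (nat list \<times> nat list \<Rightarrow> 'a::field) set \<Rightarrow> bool" where
  "is_subspace p q \<A> \<longleftrightarrow> \<A> \<subseteq> KM p q \<and> (\<lambda>x. 0) \<in> \<A> \<and>
     (\<forall>f\<in>\<A>. \<forall>g\<in>\<A>. (\<lambda>x. f x + g x) \<in> \<A>) \<and> (\<forall>c. \<forall>f\<in>\<A>. (\<lambda>x. c * f x) \<in> \<A>)"

definition shift :: "nat list \<Rightarrow> nat list \<Rightarrow> (nat list \<times> nat list \<Rightarrow> 'a) \<Rightarrow> (nat list \<times> nat list \<Rightarrow> 'a)" where
  "shift S T A = (\<lambda>(U, W). A (U @ S, W @ T))"

definition rec_closed :: "nat \<Rightarrow> nat \<Rightarrow> (nat list \<times> nat list \<Rightarrow> 'a) set \<Rightarrow> bool" where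
  "rec_closed p q \<A> \<longleftrightarrow> (\<forall>S T. inM p q (S, T) \<longrightarrow> (\<forall>A\<in>\<A>. shift S T A \<in> \<A>))"

definition restr :: "nat \<Rightarrow> nat \<Rightarrow> nat \<Rightarrow> (nat list \<times> nat list \<Rightarrow> 'a::zero) \<Rightarrow> (nat list \<times> nat list \<Rightarrow> 'a)" where
  "restr p q l A = (\<lambda>x. if inM_le p q l x then A x else 0)"

(* the natural projection A[M^{<=N+1}] -> A[M^{<=N}] (always surjective) is an isomorphism,
   i.e. injective *)
definition proj_iso :: "nat \<Rightarrow> nat \<Rightarrow> (nat list \<times> nat list \<Rightarrow> 'a::zero) set \<Rightarrow> nat \<Rightarrow> bool" where
  "proj_iso p q \<A> N \<longleftrightarrow> bij_betw (restr p q N) (restr p q (Suc N) ` \<A>) (restr p q N ` \<A>)"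

definition has_saturation_level :: "nat \<Rightarrow> nat \<Rightarrow> (nat list \<times> nat list \<Rightarrow> 'a::zero) set \<Rightarrow> nat \<Rightarrow> bool" where
  "has_saturation_level p q \<A> N \<longleftrightarrow> \<A> \<noteq> {\<lambda>x. 0} \<and> proj_iso p q \<A> N \<and> (\<forall>M<N. \<not> proj_iso p q \<A> M)"

definition lin_span :: "(nat list \<times> nat list \<Rightarrow> 'a::field) set \<Rightarrow> (nat list \<times> nat list \<Rightarrow> 'a) set" where
  "lin_span B = {(\<lambda>x. \<Sum>b\<in>B. c b * b x) | c. True}"

definition fin_dim :: "(nat list \<times> nat list \<Rightarrow> 'a::field) set \<Rightarrow> bool" where
  "fin_dim \<A> \<longleftrightarrow> (\<exists>B. finite B \<and> B \<subseteq> \<A> \<and> \<A> \<subseteq> lin_span B)"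

definition Rec :: "nat \<Rightarrow> nat \<Rightarrow> (nat list \<times> nat list \<Rightarrow> 'a::field) set" where
  "Rec p q = {A \<in> KM p q. \<exists>B. finite B \<and> (\<forall>S T. inM p q (S, T) \<longrightarrow> shift S T A \<in> lin_span B)}"

end

theory Submission
  imports Defs
begin

(* If A vanishes on M^{<= N}, injectivity of the projection at level N forces it to vanish on
   M^{<= N+1}. Every one-letter shift of A then again vanishes on M^{<= N}, so by induction on the
   word length A vanishes everywhere: restriction to M^{<= N} is injective on the space. Since
   M^{<= N} is finite, finitely many elements of the space reproduce every element on M^{<= N},
   hence everywhere; recursive closedness keeps all shifts of an element inside their span. *)

lemma subspace_zero: "is_subspace p q \<A> \<Longrightarrow> (\<lambda>x. 0) \<in> \<A>"
  unfolding is_subspace_def by blast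

lemma subspace_add: "is_subspace p q \<A> \<Longrightarrow> f \<in> \<A> \<Longrightarrow> g \<in> \<A> \<Longrightarrow> (\<lambda>x. f x + g x) \<in> \<A>"
  unfolding is_subspace_def by blast

lemma subspace_scale: "is_subspace p q \<A> \<Longrightarrow> f \<in> \<A> \<Longrightarrow> (\<lambda>x. c * f x) \<in> \<A>"
  unfolding is_subspace_def by blast

lemma subspace_diff:
  assumes "is_subspace p q \<A>" "f \<in> \<A>" "g \<in> \<A>"
  shows "(\<lambda>x. f x - g x) \<in> \<A>"
  using subspace_add[OF assms(1,2) subspace_scale[OF assms(1,3), of "-1"]] by simp

lemma subspace_vanishing_at:
  "is_subspace p q \<A> \<Longrightarrow> is_subspace p q {A \<in> \<A>. A y = 0}"
  unfolding is_subspace_def by auto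

lemma subspace_outside_inM: "is_subspace p q \<A> \<Longrightarrow> A \<in> \<A> \<Longrightarrow> \<not> inM p q x \<Longrightarrow> A x = 0"
  unfolding is_subspace_def KM_def by blast

lemma lin_comb_in_lin_span: "(\<lambda>x. \<Sum>b\<in>B. c b * b x) \<in> lin_span B"
  unfolding lin_span_def by blast

lemma lin_span_subset_subspace:
  assumes "is_subspace p q \<A>" "finite B" "B \<subseteq> \<A>"
  shows "lin_span B \<subseteq> \<A>"
proof -
  have "(\<lambda>x. \<Sum>b\<in>B. c b * b x) \<in> \<A>" for c
    using assms(2,3)
  proof (induction B rule: finite_induct)
    case empty
    show ?case using subspace_zero[OF assms(1)] by simp
  next
    case (insert b B)
    then show ?case
      using subspace_add[OF assms(1) subspace_scale[OF assms(1)]] by simp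
  qed
  then show ?thesis unfolding lin_span_def by blast
qed

lemma lin_span_add:
  assumes "f \<in> lin_span B" "g \<in> lin_span B"
  shows "(\<lambda>x. f x + g x) \<in> lin_span B"
proof -
  obtain c d where "f = (\<lambda>x. \<Sum>b\<in>B. c b * b x)" "g = (\<lambda>x. \<Sum>b\<in>B. d b * b x)"
    using assms unfolding lin_span_def by blast
  then have "(\<lambda>x. f x + g x) = (\<lambda>x. \<Sum>b\<in>B. (c b + d b) * b x)"
    by (simp add: sum.distrib distrib_right)
  then show ?thesis by (simp only: lin_comb_in_lin_span)
qed

lemma scaled_generator_in_lin_span:
  assumes "finite B" "b \<in> B"
  shows "(\<lambda>x. k * b x) \<in> lin_span B"
proof -
  have "(\<Sum>b'\<in>B. (if b' = b then k else 0) * b' x) = k * b x" for x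
  proof -
    have "(if b' = b then k else 0) * y = (if b' = b then k * y else 0)" for b' and y :: 'a
      by simp
    then show ?thesis using assms by (simp add: sum.delta')
  qed
  then show ?thesis using lin_comb_in_lin_span[of "\<lambda>b'. if b' = b then k else 0" B] by simp
qed

lemma lin_span_mono:
  assumes "finite B'" "B \<subseteq> B'"
  shows "lin_span B \<subseteq> lin_span B'"
proof
  fix f assume "f \<in> lin_span B"
  then obtain c where f: "f = (\<lambda>x. \<Sum>b\<in>B. c b * b x)" unfolding lin_span_def by blast
  have "(\<Sum>b\<in>B'. (if b \<in> B then c b else 0) * b x) = (\<Sum>b\<in>B. c b * b x)" for x
    using assms by (intro sum.mono_neutral_cong_right) auto
  then show "f \<in> lin_span B'"
    using lin_comb_in_lin_span[of "\<lambda>b. if b \<in> B then c b else 0" B'] unfolding f by simp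
qed

lemma lin_span_vanishing_at:
  "f \<in> lin_span B \<Longrightarrow> \<forall>b\<in>B. b y = 0 \<Longrightarrow> f y = 0"
  unfolding lin_span_def by (auto intro!: sum.neutral)

lemma finite_inM_le: "finite {x. inM_le p q l x}"
proof (rule finite_subset)
  show "{x. inM_le p q l x} \<subseteq>
      {U. set U \<subseteq> {..<p} \<and> length U \<le> l} \<times> {W. set W \<subseteq> {..<q} \<and> length W \<le> l}"
    unfolding inM_le_def inM_def by auto
  show "finite ({U. set U \<subseteq> {..<p} \<and> length U \<le> l} \<times> {W. set W \<subseteq> {..<q} \<and> length W \<le> l})"
    using finite_lists_length_le[of "{..<p}" l] finite_lists_length_le[of "{..<q}" l] by blast
qed

(* Induction on X: a spanning family of the elements vanishing at the new point y, together with
   one element a not vanishing at y (or a = 0 if there is none), spans on insert y X. *)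
lemma subspace_finite_spanning_on:
  assumes "finite X" "is_subspace p q \<A>"
  shows "\<exists>B. finite B \<and> B \<subseteq> \<A> \<and> (\<forall>A\<in>\<A>. \<exists>f\<in>lin_span B. \<forall>x\<in>X. A x = f x)"
  using assms
proof (induction X arbitrary: \<A> rule: finite_induct)
  case empty
  have "(\<lambda>x. 0) \<in> lin_span {}" using lin_comb_in_lin_span[where B="{}"] by simp
  then show ?case by blast
next
  case (insert y X)
  let ?\<A>y = "{A \<in> \<A>. A y = 0}"
  obtain B where B: "finite B" "B \<subseteq> ?\<A>y"
    and span_B: "\<forall>A\<in>?\<A>y. \<exists>f\<in>lin_span B. \<forall>x\<in>X. A x = f x"
    using insert.IH[OF subspace_vanishing_at[OF insert.prems, of y]] by blast
  obtain a k where a: "a \<in> \<A>"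
    and reduce: "\<And>A. A \<in> \<A> \<Longrightarrow> (\<lambda>x. A x - k A * a x) \<in> ?\<A>y"
  proof (cases "\<exists>a\<in>\<A>. a y \<noteq> 0")
    case True
    then obtain a where "a \<in> \<A>" "a y \<noteq> 0" by blast
    have "(\<lambda>x. A x - A y / a y * a x) \<in> ?\<A>y" if "A \<in> \<A>" for A
      using subspace_diff[OF insert.prems that
          subspace_scale[OF insert.prems \<open>a \<in> \<A>\<close>, of "A y / a y"]] \<open>a y \<noteq> 0\<close>
      by simp
    then show ?thesis using that[of a "\<lambda>A. A y / a y"] \<open>a \<in> \<A>\<close> by blast
  next
    case False
    then show ?thesis using that[of "\<lambda>x. 0" "\<lambda>A. 0"] subspace_zero[OF insert.prems] by auto
  qed
  have "\<exists>f\<in>lin_span (insert a B). \<forall>x\<in>insert y X. A x = f x" if "A \<in> \<A>" for A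
  proof -
    obtain g where g: "g \<in> lin_span B" "\<forall>x\<in>X. A x - k A * a x = g x"
      using bspec[OF span_B reduce[OF \<open>A \<in> \<A>\<close>]] by auto
    have "g y = 0" "A y - k A * a y = 0"
      using lin_span_vanishing_at[OF g(1), of y] B(2) reduce[OF \<open>A \<in> \<A>\<close>] by auto
    then have "\<forall>x\<in>insert y X. A x = g x + k A * a x" using g(2) by (auto simp: algebra_simps)
    moreover have "(\<lambda>x. g x + k A * a x) \<in> lin_span (insert a B)"
      using lin_span_add[OF lin_span_mono[of "insert a B" B, THEN subsetD, OF _ _ g(1)]
          scaled_generator_in_lin_span[of "insert a B" a]] B(1) by blast
    ultimately show ?thesis by (intro bexI[of _ "\<lambda>x. g x + k A * a x"]) simp_all
  qed
  then show ?case using B a by (intro exI[of _ "insert a B"]) auto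
qed

lemma restr_restr: "l \<le> m \<Longrightarrow> restr p q l (restr p q m A) = restr p q l A"
  unfolding restr_def inM_le_def by auto

lemma restr_zero: "restr p q l (\<lambda>x. 0) = (\<lambda>x. 0)"
  unfolding restr_def by simp

lemma restr_shift_eq_zero:
  assumes "restr p q (Suc l) A = (\<lambda>x. 0)" "inM p q ([s], [t])"
  shows "restr p q l (shift [s] [t] A) = (\<lambda>x. 0)"
proof
  fix x :: "nat list \<times> nat list"
  obtain U W where x: "x = (U, W)" by force
  have "inM_le p q l x \<Longrightarrow> inM_le p q (Suc l) (U @ [s], W @ [t])"
    using assms(2) unfolding x inM_le_def inM_def by auto
  then show "restr p q l (shift [s] [t] A) x = 0"
    using fun_cong[OF assms(1), of "(U @ [s], W @ [t])"] unfolding restr_def shift_def x by auto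
qed

lemma proj_iso_vanishing_next_level:
  assumes "is_subspace p q \<A>" "proj_iso p q \<A> N" "A \<in> \<A>" "restr p q N A = (\<lambda>x. 0)"
  shows "restr p q (Suc N) A = (\<lambda>x. 0)"
proof -
  have "inj_on (restr p q N) (restr p q (Suc N) ` \<A>)"
    using assms(2) unfolding proj_iso_def bij_betw_def by blast
  moreover have "restr p q N (restr p q (Suc N) A) = restr p q N (restr p q (Suc N) (\<lambda>x. 0))"
    using assms(4) by (simp add: restr_restr restr_zero)
  ultimately have "restr p q (Suc N) A = restr p q (Suc N) (\<lambda>x. 0)"
    using assms(3) subspace_zero[OF assms(1)] by (blast dest: inj_onD)
  then show ?thesis by (simp add: restr_zero)
qed

lemma proj_iso_vanishing_imp_zero:
  assumes "is_subspace p q \<A>" "rec_closed p q \<A>" "proj_iso p q \<A> N"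
    and "A \<in> \<A>" "restr p q N A = (\<lambda>x. 0)"
  shows "A = (\<lambda>x. 0)"
proof
  have on_M: "A (U, W) = 0" if "inM p q (U, W)" for U W
    using that assms(4,5)
  proof (induction U arbitrary: W A rule: rev_induct)
    case Nil
    then have "inM_le p q N ([], W)" unfolding inM_le_def inM_def by simp
    then show ?case using fun_cong[OF Nil(3), of "([], W)"] unfolding restr_def by simp
  next
    case (snoc s U)
    obtain W' t where W: "W = W' @ [t]"
      using snoc.prems(1) by (cases W rule: rev_cases) (auto simp: inM_def)
    have st: "inM p q ([s], [t])" using snoc.prems(1) unfolding W inM_def by auto
    have "inM p q (U, W')" using snoc.prems(1) unfolding W inM_def by auto
    moreover have "shift [s] [t] A \<in> \<A>"
      using assms(2) st snoc.prems(2) unfolding rec_closed_def by blast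
    moreover have "restr p q N (shift [s] [t] A) = (\<lambda>x. 0)"
      using restr_shift_eq_zero[OF proj_iso_vanishing_next_level[OF assms(1,3) snoc.prems(2,3)] st] .
    ultimately have "shift [s] [t] A (U, W') = 0" by (rule snoc.IH)
    then show ?case unfolding W shift_def by simp
  qed
  show "A x = 0" for x
  proof (cases "inM p q x")
    case True
    then show ?thesis using on_M by (cases x) simp
  next
    case False
    then show ?thesis using subspace_outside_inM[OF assms(1,4)] by simp
  qed
qed

lemma proj_iso_inj_on_restr:
  assumes "is_subspace p q \<A>" "rec_closed p q \<A>" "proj_iso p q \<A> N"
  shows "inj_on (restr p q N) \<A>"
proof (rule inj_onI)
  fix f g assume "f \<in> \<A>" "g \<in> \<A>" and fg: "restr p q N f = restr p q N g"
  have "restr p q N (\<lambda>x. f x - g x) = (\<lambda>x. 0)"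
    using fg unfolding restr_def by (auto simp: fun_eq_iff split: if_splits)
  then have "(\<lambda>x. f x - g x) = (\<lambda>x. 0)"
    using proj_iso_vanishing_imp_zero[OF assms subspace_diff[OF assms(1) \<open>f \<in> \<A>\<close> \<open>g \<in> \<A>\<close>]]
    by blast
  then show "f = g" by (simp add: fun_eq_iff)
qed

lemma fin_dim_if_inj_on_restr:
  assumes "is_subspace p q \<A>" "inj_on (restr p q l) \<A>"
  shows "fin_dim \<A>"
proof -
  obtain B where B: "finite B" "B \<subseteq> \<A>"
    and span_B: "\<forall>A\<in>\<A>. \<exists>f\<in>lin_span B. \<forall>x\<in>{x. inM_le p q l x}. A x = f x"
    using subspace_finite_spanning_on[OF finite_inM_le[of p q l] assms(1)] by blast
  have "A \<in> lin_span B" if "A \<in> \<A>" for A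
  proof -
    obtain f where f: "f \<in> lin_span B" "\<forall>x\<in>{x. inM_le p q l x}. A x = f x"
      using span_B \<open>A \<in> \<A>\<close> by blast
    have "restr p q l A = restr p q l f" using f(2) unfolding restr_def by auto
    moreover have "f \<in> \<A>" using f(1) lin_span_subset_subspace[OF assms(1) B] by blast
    ultimately have "A = f" using inj_onD[OF assms(2)] \<open>A \<in> \<A>\<close> by blast
    then show ?thesis using f(1) by simp
  qed
  then show ?thesis unfolding fin_dim_def using B by blast
qed

lemma rec_closed_fin_dim_subset_Rec:
  assumes "is_subspace p q \<A>" "rec_closed p q \<A>" "fin_dim \<A>"
  shows "\<A> \<subseteq> Rec p q"
proof
  fix A assume "A \<in> \<A>"
  obtain B where "finite B" "\<A> \<subseteq> lin_span B" using assms(3) unfolding fin_dim_def by blast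
  moreover have "shift S T A \<in> \<A>" if "inM p q (S, T)" for S T
    using assms(2) that \<open>A \<in> \<A>\<close> unfolding rec_closed_def by blast
  moreover have "A \<in> KM p q" using assms(1) \<open>A \<in> \<A>\<close> unfolding is_subspace_def by blast
  ultimately show "A \<in> Rec p q" unfolding Rec_def by blast
qed

theorem mainTheorem4:
  fixes p q N :: nat and \<A> :: "(nat list \<times> nat list \<Rightarrow> 'a::field) set"
  assumes "is_subspace p q \<A>"
    and "rec_closed p q \<A>"
    and "has_saturation_level p q \<A> N"
  shows "bij_betw (restr p q N) \<A> (restr p q N ` \<A>) \<and> fin_dim \<A> \<and> \<A> \<subseteq> Rec p q"
proof -
  have "proj_iso p q \<A> N" using assms(3) unfolding has_saturation_level_def by blast
  then have inj: "inj_on (restr p q N) \<A>" using proj_iso_inj_on_restr assms(1,2) by blast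
  then have "fin_dim \<A>" using fin_dim_if_inj_on_restr assms(1) by blast
  then show ?thesis
    using inj_on_imp_bij_betw[OF inj] rec_closed_fin_dim_subset_Rec assms(1,2) by blast
qed

end
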